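(* Let $G=(V,E)$ be an undirected graph (loops excluded, parallel edges allowed). An orientation of $G$ is decreasingly minimal if and only if it is increasingly maximal.
   Context: For an orientation $D$ of $G$, its in-degree vector is $m(v)=\varrho_D(v)$, the number of arcs of $D$ with head $v$. An orientation is decreasingly minimal (dec-min) if its in-degree vector is decreasingly minimal among in-degree vectors of all orientations of $G$: its largest component is as small as possible, within this its second largest is as small as possible, and so on. It is increasingly maximal (inc-max) if its in-degree vector has smallest component as large as possible, within this its second smallest component as large as possible, and so on. *)

theory Defs
  imports Main "HOL-Library.Multiset"
begin

text \<open>An undirected graph (loops excluded, parallel edges allowed) is given by a finite
vertex set V, a finite set E of edge names and a map ends assigning to each edge its two
(distinct) end-vertices.\<close>

definition graph :: "'v set \<Rightarrow> 'e set \<Rightarrow> ('e \<Rightarrow> 'v \<times> 'v) \<Rightarrow> bool" where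
  "graph V E ends \<longleftrightarrow> finite V \<and> finite E \<and>
     (\<forall>e\<in>E. fst (ends e) \<in> V \<and> snd (ends e) \<in> V \<and> fst (ends e) \<noteq> snd (ends e))"

text \<open>An orientation is given by choosing, for every edge, its head (one of its ends).\<close>

definition orientation :: "'e set \<Rightarrow> ('e \<Rightarrow> 'v \<times> 'v) \<Rightarrow> ('e \<Rightarrow> 'v) \<Rightarrow> bool" where
  "orientation E ends h \<longleftrightarrow> (\<forall>e\<in>E. h e = fst (ends e) \<or> h e = snd (ends e))"

definition indeg :: "'e set \<Rightarrow> ('e \<Rightarrow> 'v) \<Rightarrow> 'v \<Rightarrow> nat" where
  "indeg E h v = card {e\<in>E. h e = v}"

definition inc_sorted :: "'v set \<Rightarrow> ('v \<Rightarrow> nat) \<Rightarrow> nat list" where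
  "inc_sorted V m = sorted_list_of_multiset (image_mset m (mset_set V))"

definition dec_sorted :: "'v set \<Rightarrow> ('v \<Rightarrow> nat) \<Rightarrow> nat list" where
  "dec_sorted V m = rev (inc_sorted V m)"

definition lex_less :: "nat list \<Rightarrow> nat list \<Rightarrow> bool" where
  "lex_less xs ys \<longleftrightarrow> length xs = length ys \<and>
     (\<exists>i<length xs. take i xs = take i ys \<and> xs ! i < ys ! i)"

definition dec_min :: "'v set \<Rightarrow> 'e set \<Rightarrow> ('e \<Rightarrow> 'v \<times> 'v) \<Rightarrow> ('e \<Rightarrow> 'v) \<Rightarrow> bool" where
  "dec_min V E ends h \<longleftrightarrow> orientation E ends h \<and>
     (\<forall>h'. orientation E ends h' \<longrightarrow>
        \<not> lex_less (dec_sorted V (indeg E h')) (dec_sorted V (indeg E h)))"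

definition inc_max :: "'v set \<Rightarrow> 'e set \<Rightarrow> ('e \<Rightarrow> 'v \<times> 'v) \<Rightarrow> ('e \<Rightarrow> 'v) \<Rightarrow> bool" where
  "inc_max V E ends h \<longleftrightarrow> orientation E ends h \<and>
     (\<forall>h'. orientation E ends h' \<longrightarrow>
        \<not> lex_less (inc_sorted V (indeg E h)) (inc_sorted V (indeg E h')))"

end

theory Submission
  imports Defs
begin

text \<open>An orientation minimizing the sum of squared in-degrees m has no directed path from u
to t with m(t) \<ge> m(u) + 2: on a shortest such path the first arc u \<rightarrow> x has m(x) = m(u) + 1,
so reversing it preserves the sum of squares and leaves a shorter such path from x. Hence, for every threshold j, the set
of vertices from which some vertex of in-degree > j is reachable is closed under entering
arcs, has m \<ge> j inside and m \<le> j outside; comparing the number of arcs entering it shows that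
this orientation minimizes the sums over v of the positive parts of m(v) - j and of j - m(v)
over all orientations.
These threshold sums detect the lexicographic order of sorted vectors, so the orientation is
both dec-min and inc-max. As the lexicographic orders are total, the dec-min and the inc-max
orientations are exactly those with the same sorted in-degree vector as this one.\<close>

definition tail :: "('e \<Rightarrow> 'v \<times> 'v) \<Rightarrow> ('e \<Rightarrow> 'v) \<Rightarrow> 'e \<Rightarrow> 'v" where
  "tail ends h e = (if h e = fst (ends e) then snd (ends e) else fst (ends e))"

definition reverse_arc :: "('e \<Rightarrow> 'v \<times> 'v) \<Rightarrow> ('e \<Rightarrow> 'v) \<Rightarrow> 'e \<Rightarrow> 'e \<Rightarrow> 'v" where
  "reverse_arc ends h e = h(e := tail ends h e)"

definition arc :: "'e set \<Rightarrow> ('e \<Rightarrow> 'v \<times> 'v) \<Rightarrow> ('e \<Rightarrow> 'v) \<Rightarrow> 'v \<Rightarrow> 'v \<Rightarrow> bool" where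
  "arc E ends h u v \<longleftrightarrow> (\<exists>e\<in>E. tail ends h e = u \<and> h e = v)"

definition indeg_sq_sum :: "'v set \<Rightarrow> 'e set \<Rightarrow> ('e \<Rightarrow> 'v) \<Rightarrow> nat" where
  "indeg_sq_sum V E h = (\<Sum>v\<in>V. (indeg E h v)\<^sup>2)"

definition indeg_sq_min :: "'v set \<Rightarrow> 'e set \<Rightarrow> ('e \<Rightarrow> 'v \<times> 'v) \<Rightarrow> ('e \<Rightarrow> 'v) \<Rightarrow> bool" where
  "indeg_sq_min V E ends h \<longleftrightarrow> orientation E ends h \<and>
     (\<forall>h'. orientation E ends h' \<longrightarrow> indeg_sq_sum V E h \<le> indeg_sq_sum V E h')"

lemma sum_indeg:
  assumes "finite E" "finite X"
  shows "(\<Sum>v\<in>X. indeg E h v) = card {e\<in>E. h e \<in> X}"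
proof -
  have "{e\<in>E. h e \<in> X} = (\<Union>v\<in>X. {e\<in>E. h e = v})" by auto
  then show ?thesis
    using assms by (simp add: indeg_def card_UN_disjoint disjoint_iff)
qed

lemma sum_indeg_eq_card:
  assumes "graph V E ends" "orientation E ends h"
  shows "(\<Sum>v\<in>V. indeg E h v) = card E"
proof -
  have "{e\<in>E. h e \<in> V} = E" using assms by (auto simp: graph_def orientation_def)
  then show ?thesis using assms(1) by (simp add: sum_indeg graph_def)
qed

lemma
  assumes "graph V E ends" "orientation E ends h" "e \<in> E"
  shows tail_neq_head: "tail ends h e \<noteq> h e"
    and tail_in_vertices: "tail ends h e \<in> V"
    and head_in_vertices: "h e \<in> V"
  using assms by (auto simp: graph_def orientation_def tail_def)

lemma ends_eq_tail_head:
  assumes "orientation E ends h" "e \<in> E"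
  shows "{fst (ends e), snd (ends e)} = {tail ends h e, h e}"
  using assms by (auto simp: orientation_def tail_def)

lemma orientation_reverse_arc:
  assumes "orientation E ends h"
  shows "orientation E ends (reverse_arc ends h e)"
  using assms by (auto simp: orientation_def reverse_arc_def tail_def)

lemma indeg_head_pos:
  assumes "finite E" "e \<in> E"
  shows "0 < indeg E h (h e)"
  using assms by (auto simp: indeg_def card_gt_0_iff)

lemma indeg_reverse_arc:
  assumes "finite E" "e \<in> E" "tail ends h e \<noteq> h e"
  shows "indeg E (reverse_arc ends h e) v =
    (if v = tail ends h e then Suc (indeg E h v)
     else if v = h e then indeg E h v - 1 else indeg E h v)"
proof -
  have "{e'\<in>E. reverse_arc ends h e e' = v} =
      (if v = tail ends h e then insert e {e'\<in>E. h e' = v}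
       else if v = h e then {e'\<in>E. h e' = v} - {e} else {e'\<in>E. h e' = v})"
    using assms(2,3) by (auto simp: reverse_arc_def)
  then show ?thesis
    using assms by (simp add: indeg_def)
qed

lemma indeg_sq_sum_reverse_arc:
  assumes g: "graph V E ends" and o: "orientation E ends h" and e: "e \<in> E"
  shows "indeg_sq_sum V E (reverse_arc ends h e) + 2 * indeg E h (h e)
         = indeg_sq_sum V E h + 2 * indeg E h (tail ends h e) + 2"
proof -
  define u where "u = tail ends h e"
  define x where "x = h e"
  let ?m = "indeg E h" and ?m' = "indeg E (reverse_arc ends h e)"
  have fin: "finite V" "finite E" using g by (auto simp: graph_def)
  have ux: "u \<noteq> x" "u \<in> V" "x \<in> V"
    using tail_neq_head[OF g o e] tail_in_vertices[OF g o e] head_in_vertices[OF g o e]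
    by (simp_all add: u_def x_def)
  have split: "(\<Sum>v\<in>V. f v) = f u + f x + (\<Sum>v\<in>V-{u}-{x}. f v)" for f :: "_ \<Rightarrow> nat"
    using fin(1) ux by (simp add: sum.remove)
  have m': "?m' u = Suc (?m u)" "?m' x = ?m x - 1" "\<And>v. v \<noteq> u \<Longrightarrow> v \<noteq> x \<Longrightarrow> ?m' v = ?m v"
    unfolding u_def x_def
    using indeg_reverse_arc[OF fin(2) e tail_neq_head[OF g o e]] tail_neq_head[OF g o e] by simp_all
  obtain a where "?m x = Suc a"
    using indeg_head_pos[OF fin(2) e] by (auto simp: x_def gr0_conv_Suc)
  then show ?thesis
    unfolding indeg_sq_sum_def split[of "\<lambda>v. (?m' v)\<^sup>2"] split[of "\<lambda>v. (?m v)\<^sup>2"]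
    using m' by (simp add: u_def x_def power2_eq_square algebra_simps)
qed

lemma indeg_sq_min_exists:
  obtains h where "indeg_sq_min V E ends h"
proof -
  have "orientation E ends (\<lambda>e. fst (ends e))" by (simp add: orientation_def)
  then obtain h where "orientation E ends h"
    "\<forall>h'. orientation E ends h' \<longrightarrow> indeg_sq_sum V E h \<le> indeg_sq_sum V E h'"
    using ex_has_least_nat[where m = "indeg_sq_sum V E"] by blast
  then show thesis using that by (auto simp: indeg_sq_min_def)
qed

lemma indeg_sq_min_head_le:
  assumes "graph V E ends" "indeg_sq_min V E ends h" "e \<in> E"
  shows "indeg E h (h e) \<le> indeg E h (tail ends h e) + 1"
proof -
  have o: "orientation E ends h" using assms(2) by (simp add: indeg_sq_min_def)
  then have "indeg_sq_sum V E h \<le> indeg_sq_sum V E (reverse_arc ends h e)"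
    using assms(2) orientation_reverse_arc[OF o] by (simp add: indeg_sq_min_def)
  then show ?thesis
    using indeg_sq_sum_reverse_arc[OF assms(1) o assms(3)] by linarith
qed

lemma indeg_sq_min_reverse_arc:
  assumes "graph V E ends" "indeg_sq_min V E ends h" "e \<in> E"
    and "indeg E h (h e) = indeg E h (tail ends h e) + 1"
  shows "indeg_sq_min V E ends (reverse_arc ends h e)"
proof -
  have o: "orientation E ends h" using assms(2) by (simp add: indeg_sq_min_def)
  then have "indeg_sq_sum V E (reverse_arc ends h e) = indeg_sq_sum V E h"
    using indeg_sq_sum_reverse_arc[OF assms(1) o assms(3)] assms(4) by simp
  then show ?thesis
    using assms(2) orientation_reverse_arc[OF o] by (simp add: indeg_sq_min_def)
qed

lemma arc_reverse_arc:
  assumes "arc E ends h a b" "a \<noteq> tail ends h e"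
  shows "arc E ends (reverse_arc ends h e) a b"
proof -
  obtain e' where e': "e' \<in> E" "tail ends h e' = a" "h e' = b"
    using assms(1) by (auto simp: arc_def)
  then have "e' \<noteq> e" using assms(2) by auto
  then have "tail ends (reverse_arc ends h e) e' = a" "reverse_arc ends h e e' = b"
    using e' by (simp_all add: reverse_arc_def tail_def)
  then show ?thesis using e'(1) by (auto simp: arc_def)
qed

lemma relpowp_avoid_source:
  fixes R :: "'a \<Rightarrow> 'a \<Rightarrow> bool"
  assumes "(R ^^ k) a b" "a \<noteq> u"
  shows "((\<lambda>x y. R x y \<and> x \<noteq> u) ^^ k) a b \<or> (\<exists>i<k. (R ^^ i) u b)"
  using assms
proof (induction k arbitrary: a)
  case 0
  then show ?case by (simp add: relpowp_0_I)
next
  case (Suc k)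
  obtain c where ac: "R a c" and cb: "(R ^^ k) c b"
    using Suc.prems(1) by (blast elim: relpowp_Suc_E2)
  show ?case
  proof (cases "c = u")
    case True
    then show ?thesis using cb by blast
  next
    case False
    from Suc.IH[OF cb False] show ?thesis
    proof
      assume "((\<lambda>x y. R x y \<and> x \<noteq> u) ^^ k) c b"
      then show ?thesis
        using relpowp_Suc_I2[where P = "\<lambda>x y. R x y \<and> x \<noteq> u"] ac Suc.prems(2) by blast
    qed (blast intro: less_SucI)
  qed
qed

text \<open>The induction ranges over all square-minimal orientations, since the first arc of the
path may get reversed; the rest of a shortest path avoids its source, so it survives.\<close>

lemma indeg_sq_min_relpowp_arc:
  assumes g: "graph V E ends"
  shows "indeg_sq_min V E ends h \<Longrightarrow> (arc E ends h ^^ n) u t \<Longrightarrow> indeg E h t \<le> indeg E h u + 1"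
proof (induction n arbitrary: h u t rule: less_induct)
  case (less n)
  show ?case
  proof (cases "u = t \<or> (\<exists>i<n. (arc E ends h ^^ i) u t)")
    case True
    then show ?thesis using less.IH less.prems(1) by auto
  next
    case False
    then have shortest: "\<not> (\<exists>i<n. (arc E ends h ^^ i) u t)" by blast
    obtain k where n: "n = Suc k"
      using False less.prems(2) by (cases n) auto
    then obtain x where "arc E ends h u x" and xt: "(arc E ends h ^^ k) x t"
      using less.prems(2) by (blast elim: relpowp_Suc_E2)
    then obtain e where e: "e \<in> E" "tail ends h e = u" "h e = x"
      by (auto simp: arc_def)
    have "indeg E h x \<le> indeg E h u + 1"
      using indeg_sq_min_head_le[OF g less.prems(1) e(1)] e(2,3) by simp
    then consider "indeg E h x \<le> indeg E h u" | "indeg E h x = indeg E h u + 1" by linarith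
    then show ?thesis
    proof cases
      case 1
      then show ?thesis using less.IH[OF _ less.prems(1) xt] n by simp
    next
      case 2
      define h' where "h' = reverse_arc ends h e"
      have o: "orientation E ends h" using less.prems(1) by (simp add: indeg_sq_min_def)
      have fin: "finite E" using g by (simp add: graph_def)
      have min': "indeg_sq_min V E ends h'"
        unfolding h'_def using indeg_sq_min_reverse_arc[OF g less.prems(1) e(1)] 2 e(2,3) by simp
      have xu: "x \<noteq> u" using 2 by auto
      then have "((\<lambda>a b. arc E ends h a b \<and> a \<noteq> u) ^^ k) x t"
        using relpowp_avoid_source[OF xt] shortest n by (blast intro: less_SucI)
      then have "(arc E ends h' ^^ k) x t"
        by (rule relpowp_mono[rotated]) (simp add: h'_def e(2)[symmetric] arc_reverse_arc)
      then have "indeg E h' t \<le> indeg E h' x + 1"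
        using less.IH[OF _ min', of k x t] n by simp
      moreover have "indeg E h' v = (if v = u then Suc (indeg E h v)
          else if v = x then indeg E h v - 1 else indeg E h v)" for v
        unfolding h'_def e(2,3)[symmetric]
        using indeg_reverse_arc[OF fin e(1) tail_neq_head[OF g o e(1)]] .
      ultimately show ?thesis using 2 xu by (cases "t = u \<or> t = x") auto
    qed
  qed
qed

lemma indeg_sq_min_rtranclp_arc:
  assumes "graph V E ends" "indeg_sq_min V E ends h" "(arc E ends h)\<^sup>*\<^sup>* u t"
  shows "indeg E h t \<le> indeg E h u + 1"
  using assms indeg_sq_min_relpowp_arc by (metis rtranclp_power)

lemma sum_indeg_le_if_closed:
  assumes "finite E" "finite X" "orientation E ends h'"
    and "\<forall>e\<in>E. h e \<in> X \<longrightarrow> fst (ends e) \<in> X \<and> snd (ends e) \<in> X"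
  shows "(\<Sum>v\<in>X. indeg E h v) \<le> (\<Sum>v\<in>X. indeg E h' v)"
proof -
  have "{e\<in>E. h e \<in> X} \<subseteq> {e\<in>E. h' e \<in> X}"
    using assms(3,4) by (auto simp: orientation_def)
  then show ?thesis
    using assms(1,2) by (simp add: sum_indeg card_mono)
qed

lemma sum_excess_le_if_threshold_set:
  fixes m m' :: "'a \<Rightarrow> nat"
  assumes "finite V" "X \<subseteq> V"
    and "\<forall>v\<in>X. j \<le> m v" "\<forall>v\<in>V - X. m v \<le> j"
    and "(\<Sum>v\<in>X. m v) \<le> (\<Sum>v\<in>X. m' v)"
  shows "(\<Sum>v\<in>V. m v - j) \<le> (\<Sum>v\<in>V. m' v - j)"
proof -
  have "(\<Sum>v\<in>V. m v - j) = (\<Sum>v\<in>X. m v - j)"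
    using assms(1,2,4) by (intro sum.mono_neutral_right) auto
  moreover have "(\<Sum>v\<in>X. m v - j) + j * card X = (\<Sum>v\<in>X. (m v - j) + j)"
    by (simp add: sum.distrib mult.commute)
  moreover have "(\<Sum>v\<in>X. (m v - j) + j) = (\<Sum>v\<in>X. m v)"
    using assms(3) by (intro sum.cong) auto
  moreover have "(\<Sum>v\<in>X. m' v) \<le> (\<Sum>v\<in>X. (m' v - j) + j)"
    by (intro sum_mono) auto
  moreover have "(\<Sum>v\<in>X. (m' v - j) + j) = (\<Sum>v\<in>X. m' v - j) + j * card X"
    by (simp add: sum.distrib mult.commute)
  moreover have "(\<Sum>v\<in>X. m' v - j) \<le> (\<Sum>v\<in>V. m' v - j)"
    using assms(1,2) by (intro sum_mono2) auto
  ultimately show ?thesis using assms(5) by linarith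
qed

lemma indeg_sq_min_sum_excess_le:
  assumes g: "graph V E ends" and min: "indeg_sq_min V E ends h" and o': "orientation E ends h'"
  shows "(\<Sum>v\<in>V. indeg E h v - j) \<le> (\<Sum>v\<in>V. indeg E h' v - j)"
proof -
  define X where "X = {u\<in>V. \<exists>t. (arc E ends h)\<^sup>*\<^sup>* u t \<and> j < indeg E h t}"
  have o: "orientation E ends h" using min by (simp add: indeg_sq_min_def)
  have fin: "finite V" "finite E" using g by (auto simp: graph_def)
  have above: "\<forall>v\<in>X. j \<le> indeg E h v"
    using indeg_sq_min_rtranclp_arc[OF g min] by (fastforce simp: X_def)
  have below: "\<forall>v\<in>V - X. indeg E h v \<le> j"
    by (auto simp: X_def)
  have closed: "\<forall>e\<in>E. h e \<in> X \<longrightarrow> fst (ends e) \<in> X \<and> snd (ends e) \<in> X"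
  proof (intro ballI impI)
    fix e assume e: "e \<in> E" and "h e \<in> X"
    then obtain t where "(arc E ends h)\<^sup>*\<^sup>* (h e) t" "j < indeg E h t"
      by (auto simp: X_def)
    moreover have "arc E ends h (tail ends h e) (h e)"
      using e by (auto simp: arc_def)
    ultimately have "tail ends h e \<in> X"
      using tail_in_vertices[OF g o e] by (auto simp: X_def intro: converse_rtranclp_into_rtranclp)
    then have "{fst (ends e), snd (ends e)} \<subseteq> X"
      using ends_eq_tail_head[OF o e] \<open>h e \<in> X\<close> by simp
    then show "fst (ends e) \<in> X \<and> snd (ends e) \<in> X" by simp
  qed
  show ?thesis
    using fin sum_indeg_le_if_closed[OF fin(2) _ o' closed] above below
    by (intro sum_excess_le_if_threshold_set[of V X]) (auto simp: X_def)
qed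

lemma sum_deficit_add_sum:
  fixes m :: "'a \<Rightarrow> nat"
  shows "(\<Sum>v\<in>V. j - m v) + (\<Sum>v\<in>V. m v) = (\<Sum>v\<in>V. m v - j) + j * card V"
proof -
  have "(\<Sum>v\<in>V. j - m v) + (\<Sum>v\<in>V. m v) = (\<Sum>v\<in>V. (j - m v) + m v)"
    by (simp add: sum.distrib)
  also have "\<dots> = (\<Sum>v\<in>V. (m v - j) + j)"
    by (rule sum.cong) auto
  finally show ?thesis by (simp add: sum.distrib mult.commute)
qed

lemma indeg_sq_min_sum_deficit_le:
  assumes g: "graph V E ends" and min: "indeg_sq_min V E ends h" and o': "orientation E ends h'"
  shows "(\<Sum>v\<in>V. j - indeg E h v) \<le> (\<Sum>v\<in>V. j - indeg E h' v)"
proof -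
  have o: "orientation E ends h" using min by (simp add: indeg_sq_min_def)
  show ?thesis
    using sum_deficit_add_sum[of j "indeg E h" V] sum_deficit_add_sum[of j "indeg E h'" V]
      sum_indeg_eq_card[OF g o] sum_indeg_eq_card[OF g o'] indeg_sq_min_sum_excess_le[OF g min o', of j]
    by linarith
qed

lemma sum_list_map_inc_sorted:
  assumes "finite V"
  shows "sum_list (map f (inc_sorted V m)) = (\<Sum>v\<in>V. f (m v))"
proof -
  have "sum_list (map f (inc_sorted V m)) = sum_mset (image_mset f (mset (inc_sorted V m)))"
    by (simp flip: sum_mset_sum_list)
  also have "\<dots> = (\<Sum>v\<in>V. f (m v))"
    by (simp add: inc_sorted_def sum_unfold_sum_mset image_mset.compositionality comp_def)
  finally show ?thesis .
qed

lemma sum_list_map_dec_sorted: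
  assumes "finite V"
  shows "sum_list (map f (dec_sorted V m)) = (\<Sum>v\<in>V. f (m v))"
  using sum_list_map_inc_sorted[OF assms]
  by (simp add: dec_sorted_def rev_map[symmetric] sum_list_rev)

lemma sorted_inc_sorted: "sorted (inc_sorted V m)"
  by (simp add: inc_sorted_def)

lemma sorted_wrt_dec_sorted: "sorted_wrt (\<ge>) (dec_sorted V m)"
  by (simp add: dec_sorted_def inc_sorted_def sorted_wrt_rev)

lemma length_inc_sorted: "length (inc_sorted V m) = card V"
  by (metis inc_sorted_def mset_sorted_list_of_multiset size_image_mset size_mset size_mset_set)

lemma length_dec_sorted: "length (dec_sorted V m) = card V"
  by (simp add: dec_sorted_def length_inc_sorted)

lemma lex_less_iff_lexord:
  "lex_less xs ys \<longleftrightarrow> length xs = length ys \<and> (xs, ys) \<in> lexord {(a, b). a < b}"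
  by (auto simp: lex_less_def lexord_take_index_conv)

lemma lex_less_linear:
  assumes "length xs = length ys"
  shows "lex_less xs ys \<or> xs = ys \<or> lex_less ys xs"
proof -
  have "(xs, ys) \<in> lexord {(a, b). a < b} \<or> xs = ys \<or> (ys, xs) \<in> lexord {(a, b). a < b}"
    by (rule lexord_linear) auto
  then show ?thesis using assms by (auto simp: lex_less_iff_lexord)
qed

lemma lex_less_imp_sum_excess_less:
  fixes xs ys :: "nat list"
  assumes "sorted_wrt (\<ge>) xs" "lex_less xs ys"
  shows "\<exists>j. sum_list (map (\<lambda>x. x - j) xs) < sum_list (map (\<lambda>x. x - j) ys)"
proof -
  obtain i where i: "i < length xs" "take i xs = take i ys" "xs ! i < ys ! i"
    and len: "length xs = length ys"
    using assms(2) by (auto simp: lex_less_def)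
  let ?j = "xs ! i"
  have xs: "xs = take i xs @ xs ! i # drop (Suc i) xs" using i(1) by (rule id_take_nth_drop)
  have ys: "ys = take i ys @ ys ! i # drop (Suc i) ys" using i(1) len by (intro id_take_nth_drop) simp
  have "\<forall>x\<in>set (drop (Suc i) xs). x \<le> ?j"
    using assms(1) xs by (metis sorted_wrt_append sorted_wrt.simps(2))
  then have "sum_list (map (\<lambda>x. x - ?j) xs) = sum_list (map (\<lambda>x. x - ?j) (take i xs))"
    by (subst xs) simp
  also have "\<dots> < sum_list (map (\<lambda>x. x - ?j) ys)"
    using i(3) by (subst ys) (simp add: i(2))
  finally show ?thesis by blast
qed

lemma lex_less_imp_sum_deficit_less:
  fixes xs ys :: "nat list"
  assumes "sorted ys" "lex_less xs ys"
  shows "\<exists>j. sum_list (map (\<lambda>y. j - y) ys) < sum_list (map (\<lambda>x. j - x) xs)"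
proof -
  obtain i where i: "i < length xs" "take i xs = take i ys" "xs ! i < ys ! i"
    and len: "length xs = length ys"
    using assms(2) by (auto simp: lex_less_def)
  let ?j = "ys ! i"
  have xs: "xs = take i xs @ xs ! i # drop (Suc i) xs" using i(1) by (rule id_take_nth_drop)
  have ys: "ys = take i ys @ ys ! i # drop (Suc i) ys" using i(1) len by (intro id_take_nth_drop) simp
  have "\<forall>y\<in>set (drop (Suc i) ys). ?j \<le> y"
    using assms(1) ys by (metis sorted_append sorted_simps(2))
  then have "sum_list (map (\<lambda>y. ?j - y) ys) = sum_list (map (\<lambda>y. ?j - y) (take i ys))"
    by (subst ys) simp
  also have "\<dots> < sum_list (map (\<lambda>x. ?j - x) xs)"
    using i(3) by (subst xs) (simp add: i(2))
  finally show ?thesis by blast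
qed

lemma indeg_sq_min_imp_dec_min:
  assumes g: "graph V E ends" and min: "indeg_sq_min V E ends h"
  shows "dec_min V E ends h"
  unfolding dec_min_def
proof (intro conjI allI impI notI)
  show "orientation E ends h" using min by (simp add: indeg_sq_min_def)
  fix h' assume o': "orientation E ends h'"
    and "lex_less (dec_sorted V (indeg E h')) (dec_sorted V (indeg E h))"
  then obtain j where "sum_list (map (\<lambda>x. x - j) (dec_sorted V (indeg E h')))
      < sum_list (map (\<lambda>x. x - j) (dec_sorted V (indeg E h)))"
    using lex_less_imp_sum_excess_less sorted_wrt_dec_sorted by blast
  then have "(\<Sum>v\<in>V. indeg E h' v - j) < (\<Sum>v\<in>V. indeg E h v - j)"
    using g by (simp add: sum_list_map_dec_sorted graph_def)
  then show False using indeg_sq_min_sum_excess_le[OF g min o', of j] by simp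
qed

lemma indeg_sq_min_imp_inc_max:
  assumes g: "graph V E ends" and min: "indeg_sq_min V E ends h"
  shows "inc_max V E ends h"
  unfolding inc_max_def
proof (intro conjI allI impI notI)
  show "orientation E ends h" using min by (simp add: indeg_sq_min_def)
  fix h' assume o': "orientation E ends h'"
    and "lex_less (inc_sorted V (indeg E h)) (inc_sorted V (indeg E h'))"
  then obtain j where "sum_list (map (\<lambda>y. j - y) (inc_sorted V (indeg E h')))
      < sum_list (map (\<lambda>x. j - x) (inc_sorted V (indeg E h)))"
    using lex_less_imp_sum_deficit_less sorted_inc_sorted by blast
  then have "(\<Sum>v\<in>V. j - indeg E h' v) < (\<Sum>v\<in>V. j - indeg E h v)"
    using g by (simp add: sum_list_map_inc_sorted graph_def)
  then show False using indeg_sq_min_sum_deficit_le[OF g min o', of j] by simp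
qed

lemma dec_min_iff_dec_sorted_eq:
  assumes "dec_min V E ends h0" "orientation E ends h"
  shows "dec_min V E ends h \<longleftrightarrow> dec_sorted V (indeg E h) = dec_sorted V (indeg E h0)"
proof
  assume "dec_min V E ends h"
  then show "dec_sorted V (indeg E h) = dec_sorted V (indeg E h0)"
    using assms lex_less_linear[of "dec_sorted V (indeg E h)" "dec_sorted V (indeg E h0)"]
    by (auto simp: dec_min_def length_dec_sorted)
next
  assume "dec_sorted V (indeg E h) = dec_sorted V (indeg E h0)"
  then show "dec_min V E ends h" using assms by (simp add: dec_min_def)
qed

lemma inc_max_iff_inc_sorted_eq:
  assumes "inc_max V E ends h0" "orientation E ends h"
  shows "inc_max V E ends h \<longleftrightarrow> inc_sorted V (indeg E h) = inc_sorted V (indeg E h0)"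
proof
  assume "inc_max V E ends h"
  then show "inc_sorted V (indeg E h) = inc_sorted V (indeg E h0)"
    using assms lex_less_linear[of "inc_sorted V (indeg E h)" "inc_sorted V (indeg E h0)"]
    by (auto simp: inc_max_def length_inc_sorted)
next
  assume "inc_sorted V (indeg E h) = inc_sorted V (indeg E h0)"
  then show "inc_max V E ends h" using assms by (simp add: inc_max_def)
qed

theorem corollary4p3:
  fixes V :: "'v set" and E :: "'e set" and ends :: "'e \<Rightarrow> 'v \<times> 'v" and h :: "'e \<Rightarrow> 'v"
  assumes "graph V E ends"
    and "orientation E ends h"
  shows "dec_min V E ends h \<longleftrightarrow> inc_max V E ends h"
proof -
  obtain h0 where min: "indeg_sq_min V E ends h0"
    using indeg_sq_min_exists by blast
  have "dec_min V E ends h \<longleftrightarrow> dec_sorted V (indeg E h) = dec_sorted V (indeg E h0)"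
    using dec_min_iff_dec_sorted_eq[OF indeg_sq_min_imp_dec_min[OF assms(1) min] assms(2)] .
  also have "\<dots> \<longleftrightarrow> inc_sorted V (indeg E h) = inc_sorted V (indeg E h0)"
    by (simp add: dec_sorted_def)
  also have "\<dots> \<longleftrightarrow> inc_max V E ends h"
    using inc_max_iff_inc_sorted_eq[OF indeg_sq_min_imp_inc_max[OF assms(1) min] assms(2)] by simp
  finally show ?thesis .
qed

end
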